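(* Let $G,H$ be loopless multigraphs on a finite set $V$ with $\deg_G(v)=\deg_H(v)=:d(v)$ for all $v$, let $n\ge2$, and for $M\in\mathcal{PM}(G\cup H)$ let $$c_M=n^{\mathrm{cycles}(M)}\prod_{w\in V}\frac{(-2)^{\underline{\underline{g_M(w)}}}}{(n+2d(w)-4)^{\underline{\underline{g_M(w)}}}}.$$ Fix a vertex $v$ and a collection $M'=(M'_w)_{w\ne v}$ of perfect matchings of the half-edges at each vertex $w\ne v$ of $G\cup H$. If the matching induced by $M'$ at $v$ contains a pair of two $G$-half-edges, then $$\sum_{M}c_M=0,$$ where the sum is over all $M\in\mathcal{PM}(G\cup H)$ that agree with $M'$ at every vertex $w\ne v$.
   Context: For integer $k\ge0$: $a^{\underline{\underline{k}}}=a(a-2)\cdots(a-2k+2)$ (empty product 1). $G\cup H$ is the multigraph on $V$ whose edge multiset is the disjoint union of $E(G)$ and $E(H)$; each edge has two half-edges, one at each endpoint, called $G$-half-edges or $H$-half-edges according to whether the edge comes from $G$ or $H$. $\mathcal{PM}(G\cup H)$ is the set of collections $M=(M_w)_{w\in V}$ with $M_w$ a perfect matching of the half-edges at $w$. $\Gamma_M$ is the multigraph on half-edges with an edge joining the two half-edges of each edge and an edge for each matched pair; $\mathrm{cycles}(M)$ is its number of components (all cycles). $g_M(w)$ is the number of pairs of $M_w$ consisting of two $G$-half-edges. The matching induced by $M'$ at $v$ pairs each half-edge $h$ at $v$ with the half-edge at $v$ reached by starting at $h$, traversing its edge, and then alternately following $M'$-matched pairs and edges until first returning to a half-edge at $v$.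 *)

theory Defs
  imports Complex_Main
begin

text \<open>The two half-edges of an
  edge e of the union G \<union> H are (x, False) and (x, True), where x = Inl e for an edge of G
  and x = Inr f for an edge of H.\<close>

type_synonym ('v, 'e) mgraph = "'e set \<times> ('e \<Rightarrow> 'v \<times> 'v)"

definition loopless_multigraph :: "'v set \<Rightarrow> ('v, 'e) mgraph \<Rightarrow> bool" where
  "loopless_multigraph V G \<longleftrightarrow> finite (fst G) \<and>
     (\<forall>e\<in>fst G. fst (snd G e) \<in> V \<and> snd (snd G e) \<in> V \<and> fst (snd G e) \<noteq> snd (snd G e))"

definition endpt :: "('v, 'e) mgraph \<Rightarrow> 'e \<Rightarrow> bool \<Rightarrow> 'v" where
  "endpt G e b = (if b then snd (snd G e) else fst (snd G e))"

definition deg :: "('v, 'e) mgraph \<Rightarrow> 'v \<Rightarrow> nat" where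
  "deg G w = card {(e, b). e \<in> fst G \<and> endpt G e b = w}"

type_synonym ('e, 'f) half = "('e + 'f) \<times> bool"

definition halfs :: "('v, 'e) mgraph \<Rightarrow> ('v, 'f) mgraph \<Rightarrow> ('e, 'f) half set" where
  "halfs G H = {(Inl e, b) | e b. e \<in> fst G} \<union> {(Inr f, b) | f b. f \<in> fst H}"

definition hvert :: "('v, 'e) mgraph \<Rightarrow> ('v, 'f) mgraph \<Rightarrow> ('e, 'f) half \<Rightarrow> 'v" where
  "hvert G H h = (case fst h of Inl e \<Rightarrow> endpt G e (snd h) | Inr f \<Rightarrow> endpt H f (snd h))"

definition halfs_at :: "('v, 'e) mgraph \<Rightarrow> ('v, 'f) mgraph \<Rightarrow> 'v \<Rightarrow> ('e, 'f) half set" where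
  "halfs_at G H w = {h \<in> halfs G H. hvert G H h = w}"

definition is_G_half :: "('e, 'f) half \<Rightarrow> bool" where
  "is_G_half h \<longleftrightarrow> isl (fst h)"

definition opp :: "('e, 'f) half \<Rightarrow> ('e, 'f) half" where
  "opp h = (fst h, \<not> snd h)"

definition perfect_matching :: "'a set \<Rightarrow> 'a set set \<Rightarrow> bool" where
  "perfect_matching S P \<longleftrightarrow> (\<forall>p\<in>P. p \<subseteq> S \<and> card p = 2) \<and> (\<forall>x\<in>S. \<exists>!p. p \<in> P \<and> x \<in> p)"

text \<open>PM(G \<union> H): collections (M_w)_{w\<in>V}, represented as functions that are {} outside V.\<close>
definition PM :: "'v set \<Rightarrow> ('v, 'e) mgraph \<Rightarrow> ('v, 'f) mgraph \<Rightarrow> ('v \<Rightarrow> ('e, 'f) half set set) set" where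
  "PM V G H = {M. (\<forall>w\<in>V. perfect_matching (halfs_at G H w) (M w)) \<and> (\<forall>w. w \<notin> V \<longrightarrow> M w = {})}"

definition Gamma_rel :: "'v set \<Rightarrow> ('v, 'e) mgraph \<Rightarrow> ('v, 'f) mgraph \<Rightarrow> ('v \<Rightarrow> ('e, 'f) half set set)
    \<Rightarrow> (('e, 'f) half \<times> ('e, 'f) half) set" where
  "Gamma_rel V G H M = {(h, opp h) | h. h \<in> halfs G H}
     \<union> {(x, y). \<exists>w\<in>V. \<exists>p\<in>M w. x \<in> p \<and> y \<in> p \<and> x \<noteq> y}"

definition cycles :: "'v set \<Rightarrow> ('v, 'e) mgraph \<Rightarrow> ('v, 'f) mgraph \<Rightarrow> ('v \<Rightarrow> ('e, 'f) half set set) \<Rightarrow> nat" where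
  "cycles V G H M = card (halfs G H // ((Gamma_rel V G H M)\<^sup>*))"

definition gM :: "('v \<Rightarrow> ('e, 'f) half set set) \<Rightarrow> 'v \<Rightarrow> nat" where
  "gM M w = card {p \<in> M w. \<forall>h\<in>p. is_G_half h}"

definition ff2 :: "real \<Rightarrow> nat \<Rightarrow> real" where
  "ff2 a k = (\<Prod>i<k. a - 2 * real i)"

definition cM :: "'v set \<Rightarrow> ('v, 'e) mgraph \<Rightarrow> ('v, 'f) mgraph \<Rightarrow> nat \<Rightarrow> ('v \<Rightarrow> ('e, 'f) half set set) \<Rightarrow> real" where
  "cM V G H n M = real n ^ cycles V G H M *
     (\<Prod>w\<in>V. ff2 (-2) (gM M w) / ff2 (real n + 2 * real (deg G w) - 4) (gM M w))"

definition mate :: "('v, 'e) mgraph \<Rightarrow> ('v, 'f) mgraph \<Rightarrow> ('v \<Rightarrow> ('e, 'f) half set set)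
    \<Rightarrow> ('e, 'f) half \<Rightarrow> ('e, 'f) half" where
  "mate G H M' h = (THE h'. h' \<noteq> h \<and> {h, h'} \<in> M' (hvert G H h))"

text \<open>{h, h'} is a pair of the matching induced by M' at v: start at h, traverse its edge,
  then alternately follow M'-matched pairs and edges until first returning to v.\<close>
definition induced_pair :: "('v, 'e) mgraph \<Rightarrow> ('v, 'f) mgraph \<Rightarrow> ('v \<Rightarrow> ('e, 'f) half set set)
    \<Rightarrow> 'v \<Rightarrow> ('e, 'f) half \<Rightarrow> ('e, 'f) half \<Rightarrow> bool" where
  "induced_pair G H M' v h h' \<longleftrightarrow>
     (let f = (\<lambda>x. opp (mate G H M' x)) in
      \<exists>k. h' = (f ^^ k) (opp h) \<and> hvert G H h' = v \<and>
          (\<forall>j<k. hvert G H ((f ^^ j) (opp h)) \<noteq> v))"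

end

theory Submission
  imports Defs
begin

text \<open>
  Every matching at v is either {a, b} + P, with P a perfect matching of the other half-edges
  at v, or, for a unique such P and x, the swap of {a, b} + P at x: the pairs {a, b} and
  {x, y} (y the partner of x in P) are replaced by {a, x} and {b, y}.  So it suffices that the
  terms of {a, b} + P and of its swaps cancel.  The walk defining the induced pair joins a
  and b in \<Gamma> without passing through v, so pairing a with b closes a cycle that meets v only
  in a and b; each swap merges it with the cycle through x and loses exactly one cycle.  If P
  has g pairs of two G-half-edges, the balance deg G v = deg H v leaves exactly 2g + 2 of the
  2 deg G v - 2 choices of x with x and y both H-half-edges; those swaps keep g such pairs,
  {a, b} + P and all other swaps have g + 1.  Writing w k for the factor of c_M at v, the
  terms sum to n^c ((n + 2 deg G v - 4 - 2g) w (g + 1) + (2g + 2) w g), which vanishes because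
  w (g + 1) / w g = -(2g + 2) / (n + 2 deg G v - 4 - 2g).
\<close>

section \<open>Perfect matchings\<close>

definition partner :: "'a set set \<Rightarrow> 'a \<Rightarrow> 'a" where
  "partner P x = (THE y. y \<noteq> x \<and> {x, y} \<in> P)"

lemma perfect_matching_subset: "perfect_matching S P \<Longrightarrow> p \<in> P \<Longrightarrow> p \<subseteq> S"
  unfolding perfect_matching_def by blast

lemma perfect_matching_unique:
  "perfect_matching S P \<Longrightarrow> p \<in> P \<Longrightarrow> q \<in> P \<Longrightarrow> x \<in> p \<Longrightarrow> x \<in> q \<Longrightarrow> p = q"
  unfolding perfect_matching_def by blast

lemma perfect_matching_doubleton:
  assumes "perfect_matching S P" "p \<in> P"
  obtains x y where "p = {x, y}" "x \<noteq> y"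
  using assms unfolding perfect_matching_def by (meson card_2_iff)

lemma partner_eqI:
  assumes pm: "perfect_matching S P" and xy: "{x, y} \<in> P" "x \<noteq> y"
  shows "partner P x = y"
  unfolding partner_def
proof (rule the_equality)
  fix z assume z: "z \<noteq> x \<and> {x, z} \<in> P"
  then have "{x, y} = {x, z}" using perfect_matching_unique[OF pm xy(1)] by blast
  with z show "z = y" by (metis doubleton_eq_iff)
qed (use xy in auto)

lemma partner:
  assumes pm: "perfect_matching S P" and x: "x \<in> S"
  shows "{x, partner P x} \<in> P" "partner P x \<noteq> x" "partner P x \<in> S"
proof -
  obtain p where p: "p \<in> P" "x \<in> p" using pm x unfolding perfect_matching_def by blast
  then obtain y where "p = {x, y}" "x \<noteq> y"
    by (metis perfect_matching_doubleton[OF pm] insert_commute insert_iff singletonD)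
  with p pm show "{x, partner P x} \<in> P" "partner P x \<noteq> x" "partner P x \<in> S"
    using partner_eqI[OF pm] perfect_matching_subset[OF pm] by auto
qed

lemma partner_partner:
  assumes pm: "perfect_matching S P" and x: "x \<in> S"
  shows "partner P (partner P x) = x"
proof (rule partner_eqI[OF pm])
  show "{partner P x, x} \<in> P" using partner(1)[OF pm x] by (simp add: insert_commute)
qed (use partner(2)[OF pm x] in simp)

lemma partner_block:
  assumes pm: "perfect_matching S P" and p: "p \<in> P" "x \<in> p"
  shows "p = {x, partner P x}"
proof -
  obtain u w where uw: "p = {u, w}" "u \<noteq> w" using perfect_matching_doubleton[OF pm p(1)] .
  then have "partner P u = w" "partner P w = u"
    using p(1) partner_eqI[OF pm] by (auto simp: insert_commute)
  with uw p(2) show ?thesis by (auto simp: insert_commute)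
qed

lemma perfect_matching_insert:
  assumes pm: "perfect_matching T P" and new: "x \<notin> T" "y \<notin> T" "x \<noteq> y"
  shows "perfect_matching (insert x (insert y T)) (insert {x, y} P)"
  unfolding perfect_matching_def
proof (rule conjI; intro ballI)
  fix p assume "p \<in> insert {x, y} P"
  then show "p \<subseteq> insert x (insert y T) \<and> card p = 2"
    using pm new(3) unfolding perfect_matching_def by auto
next
  fix z assume z: "z \<in> insert x (insert y T)"
  have disj: "z \<notin> q" if "q \<in> P" "z \<in> {x, y}" for q
    using perfect_matching_subset[OF pm that(1)] new that(2) by blast
  show "\<exists>!p. p \<in> insert {x, y} P \<and> z \<in> p"
  proof (cases "z \<in> T")
    case True
    then have "z \<notin> {x, y}" using new by blast
    then have "(p \<in> insert {x, y} P \<and> z \<in> p) \<longleftrightarrow> (p \<in> P \<and> z \<in> p)" for p by blast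
    then show ?thesis using pm True unfolding perfect_matching_def by simp
  next
    case False
    then have "z \<in> {x, y}" using z by blast
    then show ?thesis using disj by blast
  qed
qed

lemma perfect_matching_Diff:
  assumes pm: "perfect_matching T P" and xy: "{x, y} \<in> P"
  shows "perfect_matching (T - {x, y}) (P - {{x, y}})"
  unfolding perfect_matching_def
proof (rule conjI; intro ballI)
  fix p assume p: "p \<in> P - {{x, y}}"
  then have "x \<notin> p" "y \<notin> p" using perfect_matching_unique[OF pm xy] by blast+
  then show "p \<subseteq> T - {x, y} \<and> card p = 2" using pm p unfolding perfect_matching_def by blast
next
  fix z assume "z \<in> T - {x, y}"
  then show "\<exists>!p. p \<in> P - {{x, y}} \<and> z \<in> p" using pm unfolding perfect_matching_def by blast
qed

lemma finite_perfect_matchings: "finite S \<Longrightarrow> finite {P. perfect_matching S P}"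
  by (rule finite_subset[of _ "Pow (Pow S)"]) (auto dest: perfect_matching_subset)

lemma perfect_matching_finite: "finite S \<Longrightarrow> perfect_matching S P \<Longrightarrow> finite P"
  by (rule finite_subset[of _ "Pow S"]) (auto dest: perfect_matching_subset)

definition matching_rel :: "'a set set \<Rightarrow> 'a rel" where
  "matching_rel P = {(x, y). \<exists>p\<in>P. x \<in> p \<and> y \<in> p \<and> x \<noteq> y}"

lemma sym_matching_rel: "sym (matching_rel P)"
  unfolding matching_rel_def sym_def by blast

lemma matching_rel_insert:
  "x \<noteq> y \<Longrightarrow> matching_rel (insert {x, y} P) = matching_rel P \<union> {(x, y), (y, x)}"
  unfolding matching_rel_def by blast

lemma matching_rel_subset: "perfect_matching T P \<Longrightarrow> matching_rel P \<subseteq> T \<times> T"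
  unfolding matching_rel_def by (blast dest: perfect_matching_subset)

lemma matching_rel_partner:
  assumes pm: "perfect_matching T P" and xy: "(x, y) \<in> matching_rel P"
  shows "x \<in> T" "y = partner P x"
proof -
  obtain p where p: "p \<in> P" "x \<in> p" "y \<in> p" "x \<noteq> y"
    using xy unfolding matching_rel_def by auto
  then show "x \<in> T" using perfect_matching_subset[OF pm] by blast
  show "y = partner P x" using p partner_block[OF pm p(1,2)] by auto
qed

lemma card_partner_both:
  assumes pm: "perfect_matching T P"
  shows "card {x \<in> T. \<phi> x \<and> \<phi> (partner P x)} = 2 * card {p \<in> P. \<forall>h\<in>p. \<phi> h}"
proof -
  let ?A = "{p \<in> P. \<forall>h\<in>p. \<phi> h}"
  have "{x \<in> T. \<phi> x \<and> \<phi> (partner P x)} = \<Union> ?A"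
  proof
    show "{x \<in> T. \<phi> x \<and> \<phi> (partner P x)} \<subseteq> \<Union> ?A"
      using partner(1)[OF pm] by blast
    show "\<Union> ?A \<subseteq> {x \<in> T. \<phi> x \<and> \<phi> (partner P x)}"
      using partner_block[OF pm] perfect_matching_subset[OF pm] by blast
  qed
  moreover have two: "card p = 2" if "p \<in> ?A" for p
    using that pm unfolding perfect_matching_def by blast
  moreover have "card (\<Union> ?A) = (\<Sum>p\<in>?A. card p)"
  proof (rule card_Union_disjoint)
    show "pairwise disjnt ?A"
      unfolding pairwise_def disjnt_def using perfect_matching_unique[OF pm] by blast
  qed (use two in \<open>auto intro: card_ge_0_finite\<close>)
  ultimately show ?thesis by simp
qed

lemma card_partner_mixed:
  assumes pm: "perfect_matching T P"
  shows "card {x \<in> T. \<phi> x \<and> \<not> \<phi> (partner P x)} = card {x \<in> T. \<not> \<phi> x \<and> \<phi> (partner P x)}"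
  by (rule bij_betw_same_card[of "partner P"], rule bij_betw_byWitness[where f' = "partner P"])
    (use partner_partner[OF pm] partner(3)[OF pm] in auto)

lemma card_partner_neither:
  assumes pm: "perfect_matching T P" and T: "finite T"
  shows "card {x \<in> T. \<not> \<phi> x \<and> \<not> \<phi> (partner P x)} + card {x \<in> T. \<phi> x} =
         card {x \<in> T. \<not> \<phi> x} + 2 * card {p \<in> P. \<forall>h\<in>p. \<phi> h}"
proof -
  have split: "card {x \<in> T. \<psi> x} = card {x \<in> T. \<psi> x \<and> \<phi> (partner P x)} +
      card {x \<in> T. \<psi> x \<and> \<not> \<phi> (partner P x)}" for \<psi>
    using T by (subst card_Un_disjoint[symmetric]) (auto intro: arg_cong[where f = card])
  show ?thesis
    using split[of \<phi>] split[of "\<lambda>x. \<not> \<phi> x"] card_partner_both[OF pm, of \<phi>]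
      card_partner_mixed[OF pm, of \<phi>] by simp
qed

lemma card_filter_insert:
  assumes "finite Q" "q \<notin> Q"
  shows "card {p \<in> insert q Q. \<phi> p} = card {p \<in> Q. \<phi> p} + (if \<phi> q then 1 else 0)"
proof -
  have "{p \<in> insert q Q. \<phi> p} = (if \<phi> q then insert q {p \<in> Q. \<phi> p} else {p \<in> Q. \<phi> p})" by auto
  then show ?thesis using assms by simp
qed

section \<open>Merging classes of a reflexive transitive closure\<close>

lemma rtrancl_Un_redundant_sym_pair:
  assumes "sym R" "(p, q) \<in> R\<^sup>*"
  shows "(R \<union> {(p, q), (q, p)})\<^sup>* = R\<^sup>*"
proof
  have "(q, p) \<in> R\<^sup>*" using assms sym_rtrancl by (blast dest: symD)
  then show "(R \<union> {(p, q), (q, p)})\<^sup>* \<subseteq> R\<^sup>*"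
    by (intro rtrancl_subset_rtrancl) (use assms in auto)
qed (rule rtrancl_mono, blast)

lemma rtrancl_Un_sym_pair_iff:
  "(z, u) \<in> (R \<union> {(a, x), (x, a)})\<^sup>* \<longleftrightarrow>
     (z, u) \<in> R\<^sup>* \<or> ((z, a) \<in> R\<^sup>* \<and> (x, u) \<in> R\<^sup>*) \<or> ((z, x) \<in> R\<^sup>* \<and> (a, u) \<in> R\<^sup>*)"
proof
  assume "(z, u) \<in> (R \<union> {(a, x), (x, a)})\<^sup>*"
  then show "(z, u) \<in> R\<^sup>* \<or> ((z, a) \<in> R\<^sup>* \<and> (x, u) \<in> R\<^sup>*) \<or> ((z, x) \<in> R\<^sup>* \<and> (a, u) \<in> R\<^sup>*)"
  proof (induction rule: rtrancl_induct)
    case (step u t)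
    from step.hyps(2) consider "(u, t) \<in> R" | "u = a" "t = x" | "u = x" "t = a" by auto
    then show ?case using step.IH by cases (meson rtrancl.rtrancl_into_rtrancl rtrancl.rtrancl_refl)+
  qed simp
next
  have "R\<^sup>* \<subseteq> (R \<union> {(a, x), (x, a)})\<^sup>*" "(a, x) \<in> (R \<union> {(a, x), (x, a)})\<^sup>*"
    "(x, a) \<in> (R \<union> {(a, x), (x, a)})\<^sup>*" by (auto intro: rtrancl_mono[THEN subsetD])
  then show "(z, u) \<in> R\<^sup>* \<or> ((z, a) \<in> R\<^sup>* \<and> (x, u) \<in> R\<^sup>*) \<or> ((z, x) \<in> R\<^sup>* \<and> (a, u) \<in> R\<^sup>*) \<Longrightarrow>
      (z, u) \<in> (R \<union> {(a, x), (x, a)})\<^sup>*"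
    by (meson rtrancl_trans subsetD)
qed

lemma Image_rtrancl_Un_sym_pair:
  assumes "sym R" and "(a, x) \<notin> R\<^sup>*"
  shows "(R \<union> {(a, x), (x, a)})\<^sup>* `` {z} =
    (if z \<in> R\<^sup>* `` {a} \<union> R\<^sup>* `` {x} then R\<^sup>* `` {a} \<union> R\<^sup>* `` {x} else R\<^sup>* `` {z})"
proof -
  have converse: "(q, p) \<in> R\<^sup>*" if "(p, q) \<in> R\<^sup>*" for p q
    using that sym_rtrancl[OF assms(1)] by (blast dest: symD)
  have chain: "(p, r) \<in> R\<^sup>*" if "(p, q) \<in> R\<^sup>*" "(q, r) \<in> R\<^sup>*" for p q r
    using that by (rule rtrancl_trans)
  show ?thesis
  proof (rule set_eqI)
    fix u
    show "u \<in> (R \<union> {(a, x), (x, a)})\<^sup>* `` {z} \<longleftrightarrow>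
      u \<in> (if z \<in> R\<^sup>* `` {a} \<union> R\<^sup>* `` {x} then R\<^sup>* `` {a} \<union> R\<^sup>* `` {x} else R\<^sup>* `` {z})"
    proof (cases "z \<in> R\<^sup>* `` {a} \<union> R\<^sup>* `` {x}")
      case True
      then show ?thesis unfolding Image_singleton_iff rtrancl_Un_sym_pair_iff if_P[OF True]
        using assms(2) converse chain by blast
    next
      case False
      then show ?thesis unfolding Image_singleton_iff rtrancl_Un_sym_pair_iff if_not_P[OF False]
        using converse by blast
    qed
  qed
qed

lemma quotient_rtrancl_Un_sym_pair:
  assumes "sym R" "a \<in> X" "(a, x) \<notin> R\<^sup>*"
  shows "X // (R \<union> {(a, x), (x, a)})\<^sup>* =
    insert (R\<^sup>* `` {a} \<union> R\<^sup>* `` {x}) (X // R\<^sup>* - {R\<^sup>* `` {a}, R\<^sup>* `` {x}})"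
proof -
  let ?E = "R\<^sup>*" and ?E' = "(R \<union> {(a, x), (x, a)})\<^sup>*"
  define Ca where "Ca = ?E `` {a}"
  define Cx where "Cx = ?E `` {x}"
  have img: "?E' `` {z} = (if z \<in> Ca \<union> Cx then Ca \<union> Cx else ?E `` {z})" for z
    unfolding Ca_def Cx_def by (rule Image_rtrancl_Un_sym_pair[OF assms(1,3)])
  have class_not_merged: "?E `` {z} \<notin> {Ca, Cx} \<longleftrightarrow> z \<notin> Ca \<union> Cx" for z
    unfolding Ca_def Cx_def using sym_rtrancl[OF assms(1)]
    by (auto dest: symD intro: rtrancl_trans)
  have "a \<in> Ca" unfolding Ca_def by blast
  have "X // ?E' = insert (Ca \<union> Cx) (X // ?E - {Ca, Cx})"
  proof
    show "X // ?E' \<subseteq> insert (Ca \<union> Cx) (X // ?E - {Ca, Cx})"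
    proof
      fix C assume "C \<in> X // ?E'"
      then obtain z where "z \<in> X" "C = ?E' `` {z}" unfolding quotient_def by blast
      then show "C \<in> insert (Ca \<union> Cx) (X // ?E - {Ca, Cx})"
        unfolding img using class_not_merged[of z] by (auto intro: quotientI)
    qed
    show "insert (Ca \<union> Cx) (X // ?E - {Ca, Cx}) \<subseteq> X // ?E'"
    proof
      fix C assume "C \<in> insert (Ca \<union> Cx) (X // ?E - {Ca, Cx})"
      then consider "C = ?E' `` {a}" | z where "z \<in> X" "z \<notin> Ca \<union> Cx" "C = ?E' `` {z}"
        unfolding quotient_def img using \<open>a \<in> Ca\<close> class_not_merged by auto
      then show "C \<in> X // ?E'" using assms(2) by cases (auto intro: quotientI)
    qed
  qed
  then show ?thesis unfolding Ca_def Cx_def .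
qed

lemma card_quotient_rtrancl_Un_sym_pair:
  assumes R: "R \<subseteq> X \<times> X" "sym R" and X: "finite X" "a \<in> X" "x \<in> X"
    and apart: "(a, x) \<notin> R\<^sup>*"
  shows "card (X // (R \<union> {(a, x), (x, a)})\<^sup>*) + 1 = card (X // R\<^sup>*)"
proof -
  let ?E = "R\<^sup>*"
  define Ca where "Ca = ?E `` {a}"
  define Cx where "Cx = ?E `` {x}"
  have Ca_Cx: "Ca \<in> X // ?E" "Cx \<in> X // ?E" "Ca \<noteq> Cx"
    unfolding Ca_def Cx_def quotient_def using X apart by blast+
  have "Ca \<union> Cx \<notin> X // ?E - {Ca, Cx}"
  proof
    assume "Ca \<union> Cx \<in> X // ?E - {Ca, Cx}"
    then obtain z where z: "Ca \<union> Cx = ?E `` {z}" "Ca \<union> Cx \<noteq> Ca" unfolding quotient_def by blast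
    then have "(z, a) \<in> ?E" unfolding Ca_def by blast
    then have "?E `` {z} = Ca"
      unfolding Ca_def using sym_rtrancl[OF R(2)] by (auto dest: symD intro: rtrancl_trans)
    then show False using z by blast
  qed
  moreover have "finite (X // ?E)" unfolding quotient_def using X(1) by simp
  moreover have "card (X // ?E - {Ca, Cx}) + 2 = card (X // ?E)"
    using Ca_Cx \<open>finite (X // ?E)\<close> card_mono[of "X // ?E" "{Ca, Cx}"]
    by (simp add: card_Diff_subset)
  ultimately show ?thesis
    unfolding quotient_rtrancl_Un_sym_pair[OF R(2) X(2) apart] Ca_def[symmetric] Cx_def[symmetric]
    by simp
qed

lemma card_quotient_swap_sym_pairs:
  assumes R: "R \<subseteq> X \<times> X" "sym R" and X: "finite X" "a \<in> X" "x \<in> X" "y \<in> X"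
    and ab: "(a, b) \<in> R\<^sup>*" and apart: "(a, x) \<notin> (R \<union> {(x, y), (y, x)})\<^sup>*"
  shows "card (X // (R \<union> {(a, x), (x, a)} \<union> {(b, y), (y, b)})\<^sup>*) + 1 =
         card (X // (R \<union> {(x, y), (y, x)} \<union> {(a, b), (b, a)})\<^sup>*)"
proof -
  let ?R1 = "R \<union> {(x, y), (y, x)}" and ?R2 = "R \<union> {(a, x), (x, a)} \<union> {(b, y), (y, b)}"
  have symmetric: "sym ?R1" "sym ?R2" "sym (?R1 \<union> {(a, x), (x, a)})"
    using R(2) unfolding sym_def by blast+
  have R_sub: "R\<^sup>* \<subseteq> ?R1\<^sup>*" "R\<^sup>* \<subseteq> ?R2\<^sup>*" "R\<^sup>* \<subseteq> (?R1 \<union> {(a, x), (x, a)})\<^sup>*"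
    by (rule rtrancl_mono; blast)+
  have "(?R1 \<union> {(a, b), (b, a)})\<^sup>* = ?R1\<^sup>*"
    using rtrancl_Un_redundant_sym_pair[OF symmetric(1)] ab R_sub(1) by blast
  moreover have "?R2\<^sup>* = (?R1 \<union> {(a, x), (x, a)})\<^sup>*"
  proof -
    have "(x, y) \<in> ?R2\<^sup>*"
    proof -
      have "(x, a) \<in> ?R2\<^sup>*" "(b, y) \<in> ?R2\<^sup>*" by auto
      with ab R_sub(2) show ?thesis by (blast intro: rtrancl_trans)
    qed
    moreover have "(b, y) \<in> (?R1 \<union> {(a, x), (x, a)})\<^sup>*"
    proof -
      have "(a, x) \<in> (?R1 \<union> {(a, x), (x, a)})\<^sup>*" "(x, y) \<in> (?R1 \<union> {(a, x), (x, a)})\<^sup>*" by auto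
      moreover have "(b, a) \<in> R\<^sup>*" using ab R(2) sym_rtrancl by (blast dest: symD)
      ultimately show ?thesis using R_sub(3) by (blast intro: rtrancl_trans)
    qed
    ultimately have "?R2\<^sup>* = (?R2 \<union> {(x, y), (y, x)})\<^sup>*"
      "(?R1 \<union> {(a, x), (x, a)})\<^sup>* = (?R1 \<union> {(a, x), (x, a)} \<union> {(b, y), (y, b)})\<^sup>*"
      using rtrancl_Un_redundant_sym_pair symmetric(2,3) by metis+
    moreover have "?R2 \<union> {(x, y), (y, x)} = ?R1 \<union> {(a, x), (x, a)} \<union> {(b, y), (y, b)}" by blast
    ultimately show ?thesis by simp
  qed
  moreover have "card (X // (?R1 \<union> {(a, x), (x, a)})\<^sup>*) + 1 = card (X // ?R1\<^sup>*)"
    by (rule card_quotient_rtrancl_Un_sym_pair[OF _ symmetric(1) X(1,2,3) apart]) (use R(1) X in auto)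
  ultimately show ?thesis by simp
qed

section \<open>Half-edges of G \<union> H\<close>

lemma opp_opp [simp]: "opp (opp h) = h"
  by (simp add: opp_def)

lemma opp_in_halfs: "h \<in> halfs G H \<Longrightarrow> opp h \<in> halfs G H"
  by (auto simp: halfs_def opp_def)

lemma finite_halfs: "finite (fst G) \<Longrightarrow> finite (fst H) \<Longrightarrow> finite (halfs G H)"
proof -
  assume "finite (fst G)" "finite (fst H)"
  moreover have "halfs G H = (\<lambda>(e, b). (Inl e, b)) ` (fst G \<times> UNIV) \<union> (\<lambda>(f, b). (Inr f, b)) ` (fst H \<times> UNIV)"
    unfolding halfs_def by auto
  ultimately show ?thesis by simp
qed

lemma halfs_at_subset: "halfs_at G H w \<subseteq> halfs G H"
  by (auto simp: halfs_at_def)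

lemma hvert_in:
  "loopless_multigraph V G \<Longrightarrow> loopless_multigraph V H \<Longrightarrow> h \<in> halfs G H \<Longrightarrow> hvert G H h \<in> V"
  by (auto simp: loopless_multigraph_def halfs_def hvert_def endpt_def)

lemma hvert_opp:
  "loopless_multigraph V G \<Longrightarrow> loopless_multigraph V H \<Longrightarrow> h \<in> halfs G H \<Longrightarrow>
   hvert G H (opp h) \<noteq> hvert G H h"
  by (auto simp: loopless_multigraph_def halfs_def hvert_def endpt_def opp_def split: if_splits)

lemma is_G_half_simps [simp]: "is_G_half (Inl e, b)" "\<not> is_G_half (Inr f, b)"
  by (simp_all add: is_G_half_def)

lemma Inl_in_halfs_at: "(Inl e, b) \<in> halfs_at G H w \<longleftrightarrow> e \<in> fst G \<and> endpt G e b = w"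
  by (simp add: halfs_at_def halfs_def hvert_def)

lemma Inr_in_halfs_at: "(Inr f, b) \<in> halfs_at G H w \<longleftrightarrow> f \<in> fst H \<and> endpt H f b = w"
  by (simp add: halfs_at_def halfs_def hvert_def)

lemma card_G_halfs_at: "card {h \<in> halfs_at G H w. is_G_half h} = deg G w"
  unfolding deg_def
proof (rule bij_betw_same_card[symmetric], rule bij_betw_byWitness[where f' = "\<lambda>(s, b). (projl s, b)"])
  show "(\<lambda>(s, b). (projl s, b)) ` {h \<in> halfs_at G H w. is_G_half h} \<subseteq> {(e, b). e \<in> fst G \<and> endpt G e b = w}"
  proof clarify
    fix s b assume "(s, b) \<in> halfs_at G H w" "is_G_half (s, b)"
    moreover obtain e where "s = Inl e" using calculation(2) by (cases s) (simp_all add: is_G_half_def)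
    ultimately show "projl s \<in> fst G \<and> endpt G (projl s) b = w"
      by (simp add: Inl_in_halfs_at)
  qed
next
  show "\<forall>h\<in>{h \<in> halfs_at G H w. is_G_half h}. (\<lambda>(e, b). (Inl e, b)) ((\<lambda>(s, b). (projl s, b)) h) = h"
    by (auto simp: is_G_half_def)
qed (auto simp: Inl_in_halfs_at)

lemma card_H_halfs_at: "card {h \<in> halfs_at G H w. \<not> is_G_half h} = deg H w"
  unfolding deg_def
proof (rule bij_betw_same_card[symmetric], rule bij_betw_byWitness[where f' = "\<lambda>(s, b). (projr s, b)"])
  show "(\<lambda>(s, b). (projr s, b)) ` {h \<in> halfs_at G H w. \<not> is_G_half h} \<subseteq> {(f, b). f \<in> fst H \<and> endpt H f b = w}"
  proof clarify
    fix s b assume "(s, b) \<in> halfs_at G H w" "\<not> is_G_half (s, b)"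
    moreover obtain e where "s = Inr e" using calculation(2) by (cases s) (simp_all add: is_G_half_def)
    ultimately show "projr s \<in> fst H \<and> endpt H (projr s) b = w"
      by (simp add: Inr_in_halfs_at)
  qed
next
  show "\<forall>h\<in>{h \<in> halfs_at G H w. \<not> is_G_half h}. (\<lambda>(e, b). (Inr e, b)) ((\<lambda>(s, b). (projr s, b)) h) = h"
    by (auto simp: is_G_half_def)
qed (auto simp: Inr_in_halfs_at)

lemma Gamma_rel_eq:
  "Gamma_rel V G H M = {(h, opp h) | h. h \<in> halfs G H} \<union> (\<Union>w\<in>V. matching_rel (M w))"
  unfolding Gamma_rel_def matching_rel_def by blast

lemma mate_eq_partner: "mate G H M' h = partner (M' (hvert G H h)) h"
  by (simp add: mate_def partner_def)

section \<open>Surgery at the vertex v\<close>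

locale induced_pair_at =
  fixes V :: "'v set" and G :: "('v, 'e) mgraph" and H :: "('v, 'f) mgraph"
    and v :: 'v and M' :: "'v \<Rightarrow> ('e, 'f) half set set" and a b :: "('e, 'f) half"
  assumes loopless: "loopless_multigraph V G" "loopless_multigraph V H"
    and v: "v \<in> V"
    and M': "\<And>w. w \<in> V - {v} \<Longrightarrow> perfect_matching (halfs_at G H w) (M' w)"
    and ab: "a \<in> halfs_at G H v" "b \<in> halfs_at G H v" "a \<noteq> b"
    and induced: "induced_pair G H M' v a b"
begin

abbreviation S :: "('e, 'f) half set" where "S \<equiv> halfs_at G H v"
abbreviation S' :: "('e, 'f) half set" where "S' \<equiv> S - {a, b}"

text \<open>Outside V the value {} is forced by the definition of PM.\<close>

definition extend :: "('e, 'f) half set set \<Rightarrow> 'v \<Rightarrow> ('e, 'f) half set set" where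
  "extend Q = (\<lambda>w. if w \<in> V - {v} then M' w else {})(v := Q)"

definition outer_rel :: "('e, 'f) half rel" where
  "outer_rel = {(h, opp h) | h. h \<in> halfs G H} \<union> (\<Union>w\<in>V - {v}. matching_rel (M' w))"

lemma Gamma_rel_extend: "Gamma_rel V G H (extend Q) = outer_rel \<union> matching_rel Q"
proof -
  have "(\<Union>w\<in>V - {v}. matching_rel (extend Q w)) = (\<Union>w\<in>V - {v}. matching_rel (M' w))"
    by (rule SUP_cong) (simp_all add: extend_def)
  moreover have "(\<Union>w\<in>V. matching_rel (extend Q w)) =
      matching_rel (extend Q v) \<union> (\<Union>w\<in>V - {v}. matching_rel (extend Q w))"
    by (subst insert_Diff[OF v, symmetric]) (simp only: UN_insert)
  ultimately have "(\<Union>w\<in>V. matching_rel (extend Q w)) =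
      matching_rel Q \<union> (\<Union>w\<in>V - {v}. matching_rel (M' w))"
    by (simp add: extend_def)
  then show ?thesis unfolding Gamma_rel_eq outer_rel_def by blast
qed

lemma finite_halfs_GH: "finite (halfs G H)"
  using loopless by (intro finite_halfs) (simp_all add: loopless_multigraph_def)

lemma finite_S: "finite S"
  using finite_halfs_GH halfs_at_subset by (rule finite_subset[rotated])

lemma sym_outer_rel: "sym outer_rel"
  unfolding outer_rel_def
proof (intro sym_Un sym_UNION ballI sym_matching_rel)
  show "sym {(h, opp h) | h. h \<in> halfs G H}"
  proof (rule symI)
    fix x y assume "(x, y) \<in> {(h, opp h) | h. h \<in> halfs G H}"
    then obtain h where "x = h" "y = opp h" "h \<in> halfs G H" by blast
    then show "(y, x) \<in> {(h, opp h) | h. h \<in> halfs G H}"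
      using opp_in_halfs[of h] by (intro CollectI exI[of _ "opp h"]) simp
  qed
qed

lemma outer_rel_subset: "outer_rel \<subseteq> halfs G H \<times> halfs G H"
proof -
  have "matching_rel (M' w) \<subseteq> halfs G H \<times> halfs G H" if "w \<in> V - {v}" for w
    by (intro subset_trans[OF matching_rel_subset[OF M'[OF that]]] Sigma_mono halfs_at_subset)
  then show ?thesis unfolding outer_rel_def by (auto intro: opp_in_halfs)
qed

lemma mate:
  assumes "h \<in> halfs G H" "hvert G H h \<in> V - {v}"
  shows "{h, mate G H M' h} \<in> M' (hvert G H h)" "mate G H M' h \<noteq> h"
    "mate G H M' h \<in> halfs G H" "hvert G H (mate G H M' h) = hvert G H h"
    "mate G H M' (mate G H M' h) = h"
proof -
  have "h \<in> halfs_at G H (hvert G H h)" using assms(1) by (simp add: halfs_at_def)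
  note p = partner[OF M'[OF assms(2)] this] partner_partner[OF M'[OF assms(2)] this]
  then show "{h, mate G H M' h} \<in> M' (hvert G H h)" "mate G H M' h \<noteq> h"
    "mate G H M' h \<in> halfs G H" "hvert G H (mate G H M' h) = hvert G H h"
    "mate G H M' (mate G H M' h) = h"
    by (auto simp: mate_eq_partner halfs_at_def)
qed

definition walk :: "nat \<Rightarrow> ('e, 'f) half" where
  "walk j = ((\<lambda>h. opp (mate G H M' h)) ^^ j) (opp a)"

definition walk_len :: nat where
  "walk_len = (SOME k. b = walk k \<and> (\<forall>j<k. hvert G H (walk j) \<noteq> v))"

lemma walk_len: "walk walk_len = b" "j < walk_len \<Longrightarrow> hvert G H (walk j) \<noteq> v"
proof -
  have "\<exists>k. b = walk k \<and> (\<forall>j<k. hvert G H (walk j) \<noteq> v)"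
    using induced unfolding induced_pair_def walk_def Let_def by blast
  then have "b = walk walk_len \<and> (\<forall>j<walk_len. hvert G H (walk j) \<noteq> v)"
    unfolding walk_len_def by (rule someI_ex)
  then show "walk walk_len = b" "j < walk_len \<Longrightarrow> hvert G H (walk j) \<noteq> v"
    by simp_all
qed

lemma walk_0: "walk 0 = opp a"
  by (simp add: walk_def)

lemma walk_Suc: "walk (Suc j) = opp (mate G H M' (walk j))"
  by (simp add: walk_def)

lemma a_in_halfs: "a \<in> halfs G H"
  by (rule subsetD[OF halfs_at_subset ab(1)])

lemma walk_away:
  assumes "j < walk_len"
  shows "walk j \<in> halfs G H" "hvert G H (walk j) \<in> V - {v}"
proof -
  show "walk j \<in> halfs G H"
    using assms
  proof (induction j)
    case 0
    show ?case using opp_in_halfs[OF a_in_halfs] by (simp add: walk_0)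
  next
    case (Suc j)
    then have "walk j \<in> halfs G H" "hvert G H (walk j) \<in> V - {v}"
      using walk_len(2)[of j] hvert_in[OF loopless] by auto
    then show ?case unfolding walk_Suc by (rule opp_in_halfs[OF mate(3)])
  qed
  then show "hvert G H (walk j) \<in> V - {v}"
    using walk_len(2)[OF assms] hvert_in[OF loopless] by blast
qed

lemma walk_len_pos: "0 < walk_len"
proof (rule ccontr)
  assume "\<not> 0 < walk_len"
  then have "b = opp a" using walk_len(1) by (simp add: walk_0)
  moreover have "hvert G H a = v" "hvert G H b = v" using ab(1,2) by (simp_all add: halfs_at_def)
  ultimately show False using hvert_opp[OF loopless a_in_halfs] by simp
qed

lemma outer_rel_opp: "h \<in> halfs G H \<Longrightarrow> (h, opp h) \<in> outer_rel"
  unfolding outer_rel_def by blast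

lemma outer_rel_mate:
  assumes "h \<in> halfs G H" "hvert G H h \<in> V - {v}"
  shows "(h, mate G H M' h) \<in> outer_rel"
proof -
  have "(h, mate G H M' h) \<in> matching_rel (M' (hvert G H h))"
    unfolding matching_rel_def using mate(1,2)[OF assms] by auto
  then show ?thesis unfolding outer_rel_def by (intro UnI2 UN_I[OF assms(2)])
qed

lemma outer_rel_walk: "j \<le> walk_len \<Longrightarrow> (a, walk j) \<in> outer_rel\<^sup>*"
proof (induction j)
  case 0
  show ?case using outer_rel_opp[OF a_in_halfs] by (simp add: walk_0)
next
  case (Suc j)
  then have j: "walk j \<in> halfs G H" "hvert G H (walk j) \<in> V - {v}" using walk_away by auto
  have "(walk j, mate G H M' (walk j)) \<in> outer_rel" by (rule outer_rel_mate[OF j])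
  moreover have "(mate G H M' (walk j), walk (Suc j)) \<in> outer_rel"
    unfolding walk_Suc by (rule outer_rel_opp[OF mate(3)[OF j]])
  moreover have "(a, walk j) \<in> outer_rel\<^sup>*" using Suc by simp
  ultimately show ?case by (blast intro: rtrancl_into_rtrancl)
qed

lemma outer_rel_a_b: "(a, b) \<in> outer_rel\<^sup>*"
  using outer_rel_walk[of walk_len] walk_len(1) by simp

lemma outer_rel_cases:
  assumes "(z, u) \<in> outer_rel"
  obtains "u = opp z" | "z \<in> halfs G H" "hvert G H z \<in> V - {v}" "u = mate G H M' z"
proof -
  have "(z, u) \<in> {(h, opp h) | h. h \<in> halfs G H} \<or> (\<exists>w\<in>V - {v}. (z, u) \<in> matching_rel (M' w))"
    using assms unfolding outer_rel_def by (simp only: Un_iff UN_iff)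
  then consider "u = opp z" | w where "w \<in> V - {v}" "(z, u) \<in> matching_rel (M' w)"
    by blast
  then show thesis
  proof cases
    case (2 w)
    then have "z \<in> halfs_at G H w" "u = partner (M' w) z"
      using matching_rel_partner[OF M'] by blast+
    then show thesis using that(2) 2(1) by (simp add: halfs_at_def mate_eq_partner)
  qed (rule that(1))
qed

text \<open>The half-edges of the cycle of \<Gamma> through a and b once {a, b} is a pair at v.\<close>

definition a_cycle :: "('e, 'f) half set" where
  "a_cycle = insert a (walk ` {..walk_len} \<union> (\<lambda>j. mate G H M' (walk j)) ` {..<walk_len})"

lemma a_cycle_cases:
  assumes "z \<in> a_cycle"
  obtains "z = a" | "z = b" | j where "j < walk_len" "z = walk j"
    | j where "j < walk_len" "z = mate G H M' (walk j)"
proof -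
  consider "z = a" | j where "j \<le> walk_len" "z = walk j" | j where "j < walk_len" "z = mate G H M' (walk j)"
    using assms unfolding a_cycle_def by blast
  then show thesis
  proof cases
    case (2 j)
    show thesis
    proof (cases "j = walk_len")
      case True
      then show thesis using that(2) 2(2) walk_len(1) by simp
    next
      case False
      then show thesis using that(3)[of j] 2 by simp
    qed
  qed (use that in blast)+
qed

lemma walk_in_a_cycle: "j \<le> walk_len \<Longrightarrow> walk j \<in> a_cycle"
  unfolding a_cycle_def by blast

lemma mate_walk_in_a_cycle: "j < walk_len \<Longrightarrow> mate G H M' (walk j) \<in> a_cycle"
  unfolding a_cycle_def by blast

lemma a_cycle_at_v:
  assumes "z \<in> a_cycle" "hvert G H z = v"
  shows "z = a \<or> z = b"
  using assms(1)
proof (cases rule: a_cycle_cases)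
  case (3 j)
  then show ?thesis using walk_away(2)[OF 3(1)] assms(2) by simp
next
  case (4 j)
  then show ?thesis using walk_away(2)[OF 4(1)] mate(4)[OF walk_away[OF 4(1)]] assms(2) by simp
qed simp_all

lemma a_in_a_cycle: "a \<in> a_cycle"
  unfolding a_cycle_def by blast

lemma b_in_a_cycle: "b \<in> a_cycle"
  using walk_in_a_cycle[of walk_len] walk_len(1) by simp

lemma opp_in_a_cycle:
  assumes "z \<in> a_cycle"
  shows "opp z \<in> a_cycle"
  using assms
proof (cases rule: a_cycle_cases)
  case 1
  then show ?thesis using walk_in_a_cycle[of 0] by (simp add: walk_0)
next
  case 2
  have "b = opp (mate G H M' (walk (walk_len - 1)))"
    using walk_len(1) walk_Suc[of "walk_len - 1"] walk_len_pos by simp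
  then have "opp b = mate G H M' (walk (walk_len - 1))" by (metis opp_opp)
  then show ?thesis using 2 mate_walk_in_a_cycle[of "walk_len - 1"] walk_len_pos by simp
next
  case (3 j)
  then show ?thesis
  proof (cases j)
    case 0
    then show ?thesis using 3 unfolding a_cycle_def by (simp add: walk_0)
  next
    case (Suc i)
    then show ?thesis using 3 mate_walk_in_a_cycle[of i] by (simp add: walk_Suc)
  qed
next
  case (4 j)
  then show ?thesis using walk_in_a_cycle[of "Suc j"] by (simp add: walk_Suc)
qed

lemma mate_in_a_cycle:
  assumes "z \<in> a_cycle" "hvert G H z \<noteq> v"
  shows "mate G H M' z \<in> a_cycle"
  using assms(1)
proof (cases rule: a_cycle_cases)
  case (3 j)
  then show ?thesis using mate_walk_in_a_cycle by simp
next
  case (4 j)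
  then show ?thesis using mate(5)[OF walk_away[OF 4(1)]] walk_in_a_cycle[of j] by simp
qed (use assms(2) ab(1,2) in \<open>simp_all add: halfs_at_def\<close>)

lemma a_cycle_closed:
  assumes pm: "perfect_matching S Q" and abQ: "{a, b} \<in> Q"
    and z: "z \<in> a_cycle" and zu: "(z, u) \<in> outer_rel \<union> matching_rel Q"
  shows "u \<in> a_cycle"
  using zu
proof
  assume "(z, u) \<in> outer_rel"
  then show ?thesis
    by (cases rule: outer_rel_cases) (use opp_in_a_cycle[OF z] mate_in_a_cycle[OF z] in auto)
next
  assume zu: "(z, u) \<in> matching_rel Q"
  then have "z = a \<or> z = b" using matching_rel_partner(1)[OF pm] a_cycle_at_v[OF z]
    by (simp add: halfs_at_def)
  moreover have "partner Q a = b" "partner Q b = a"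
    using partner_eqI[OF pm] abQ ab(3) by (auto simp: insert_commute)
  ultimately show ?thesis using matching_rel_partner(2)[OF pm zu] a_in_a_cycle b_in_a_cycle
    by auto
qed

lemma component_of_a_at_v:
  assumes pm: "perfect_matching S Q" and abQ: "{a, b} \<in> Q"
    and reach: "(a, z) \<in> (outer_rel \<union> matching_rel Q)\<^sup>*" and z: "z \<in> S"
  shows "z = a \<or> z = b"
proof -
  from reach have "z \<in> a_cycle"
    by (induction rule: rtrancl_induct) (use a_in_a_cycle a_cycle_closed[OF pm abQ] in blast)+
  then show ?thesis using a_cycle_at_v z by (simp add: halfs_at_def)
qed

definition swap :: "('e, 'f) half set set \<Rightarrow> ('e, 'f) half \<Rightarrow> ('e, 'f) half set set" where
  "swap P x = insert {a, x} (insert {b, partner P x} (P - {{x, partner P x}}))"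

lemma S_eq: "S = insert a (insert b S')"
  using ab(1,2) by blast

lemma perfect_matching_insert_ab:
  "perfect_matching S' P \<Longrightarrow> perfect_matching S (insert {a, b} P)"
  using perfect_matching_insert[of S' P a b] ab(3) S_eq by simp

lemma cycles_swap:
  assumes pm: "perfect_matching S' P" and x: "x \<in> S'"
  shows "cycles V G H (extend (swap P x)) + 1 = cycles V G H (extend (insert {a, b} P))"
proof -
  define y where "y = partner P x"
  have xy: "{x, y} \<in> P" "x \<noteq> y" "y \<in> S'" using partner[OF pm x] unfolding y_def by auto
  have ax: "a \<noteq> x" and by_ne: "b \<noteq> y" using x xy(3) by auto
  have x_halfs: "x \<in> halfs G H" and y_halfs: "y \<in> halfs G H"
    using x xy(3) halfs_at_subset[of G H v] by blast+
  define R where "R = outer_rel \<union> matching_rel (P - {{x, y}})"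
  have "matching_rel P = matching_rel (P - {{x, y}}) \<union> {(x, y), (y, x)}"
    using matching_rel_insert[OF xy(2), of "P - {{x, y}}"] xy(1) by (simp add: insert_absorb)
  then have Gamma_ab: "Gamma_rel V G H (extend (insert {a, b} P)) = R \<union> {(x, y), (y, x)} \<union> {(a, b), (b, a)}"
    unfolding Gamma_rel_extend R_def matching_rel_insert[OF ab(3)] by (simp add: Un_ac)
  have Gamma_swap: "Gamma_rel V G H (extend (swap P x)) = R \<union> {(a, x), (x, a)} \<union> {(b, y), (y, b)}"
    unfolding Gamma_rel_extend R_def swap_def y_def[symmetric] matching_rel_insert[OF ax]
      matching_rel_insert[OF by_ne] by (simp add: Un_ac insert_commute)
  have pm_xy: "perfect_matching (S' - {x, y}) (P - {{x, y}})"
    using perfect_matching_Diff[OF pm xy(1)] .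
  have "S' - {x, y} \<subseteq> halfs G H" using halfs_at_subset by (rule subset_trans[OF Diff_subset subset_trans[OF Diff_subset]])
  then have R_sub: "R \<subseteq> halfs G H \<times> halfs G H"
    unfolding R_def using outer_rel_subset subset_trans[OF matching_rel_subset[OF pm_xy]] by blast
  have "sym R" unfolding R_def by (intro sym_Un sym_outer_rel sym_matching_rel)
  have "(a, b) \<in> R\<^sup>*"
    by (rule rtrancl_mono[THEN subsetD, OF _ outer_rel_a_b]) (simp add: R_def)
  have "(a, x) \<notin> (R \<union> {(x, y), (y, x)})\<^sup>*"
  proof
    assume "(a, x) \<in> (R \<union> {(x, y), (y, x)})\<^sup>*"
    then have "(a, x) \<in> (outer_rel \<union> matching_rel (insert {a, b} P))\<^sup>*"
      unfolding Gamma_rel_extend[symmetric] Gamma_ab by (rule rtrancl_mono[THEN subsetD, rotated]) blast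
    then have "x = a \<or> x = b"
      using x by (intro component_of_a_at_v[OF perfect_matching_insert_ab[OF pm]]) simp_all
    then show False using x by blast
  qed
  then have "card (halfs G H // (R \<union> {(a, x), (x, a)} \<union> {(b, y), (y, b)})\<^sup>*) + 1 =
      card (halfs G H // (R \<union> {(x, y), (y, x)} \<union> {(a, b), (b, a)})\<^sup>*)"
    by (rule card_quotient_swap_sym_pairs[OF R_sub \<open>sym R\<close> finite_halfs_GH a_in_halfs x_halfs y_halfs
          \<open>(a, b) \<in> R\<^sup>*\<close>])
  then show ?thesis unfolding cycles_def Gamma_ab Gamma_swap .
qed

definition unswap :: "('e, 'f) half set set \<Rightarrow> ('e, 'f) half set set" where
  "unswap Q = insert {partner Q a, partner Q b} (Q - {{a, partner Q a}} - {{b, partner Q b}})"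

lemma swap:
  assumes pm: "perfect_matching S' P" and x: "x \<in> S'"
  shows "perfect_matching S (swap P x)" "{a, b} \<notin> swap P x"
    "partner (swap P x) a = x" "unswap (swap P x) = P"
proof -
  define y where "y = partner P x"
  have xy: "{x, y} \<in> P" "y \<noteq> x" "y \<in> S'" using partner[OF pm x] unfolding y_def by auto
  have ne: "a \<noteq> x" "a \<noteq> y" "b \<noteq> x" "b \<noteq> y" using x xy(3) by auto
  define P1 where "P1 = P - {{x, y}}"
  have swap_eq: "swap P x = insert {a, x} (insert {b, y} P1)" unfolding swap_def P1_def y_def ..
  have "perfect_matching (S' - {x, y}) P1"
    unfolding P1_def by (rule perfect_matching_Diff[OF pm xy(1)])
  then have "perfect_matching (insert b (insert y (S' - {x, y}))) (insert {b, y} P1)"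
    by (rule perfect_matching_insert) (use ne in auto)
  then have "perfect_matching (insert a (insert x (insert b (insert y (S' - {x, y}))))) (swap P x)"
    unfolding swap_eq by (rule perfect_matching_insert) (use ne ab(3) xy(2) in auto)
  moreover have "insert a (insert x (insert b (insert y (S' - {x, y})))) = S"
    using S_eq x xy(3) by blast
  ultimately show pm_swap: "perfect_matching S (swap P x)" by simp
  have not_in_P: "{a, x} \<notin> P" "{b, y} \<notin> P" "{a, b} \<notin> P"
    using perfect_matching_subset[OF pm] by blast+
  have distinct: "{a, x} \<noteq> {b, y}" "{a, b} \<noteq> {a, x}" "{a, b} \<noteq> {b, y}"
    using ab(3) ne by (auto simp: doubleton_eq_iff)
  show "{a, b} \<notin> swap P x" unfolding swap_eq P1_def using not_in_P distinct by blast
  show pa: "partner (swap P x) a = x"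
    by (rule partner_eqI[OF pm_swap]) (use ne in \<open>simp_all add: swap_eq\<close>)
  have pb: "partner (swap P x) b = y"
    by (rule partner_eqI[OF pm_swap]) (use ne in \<open>simp_all add: swap_eq\<close>)
  have "swap P x - {{a, x}} - {{b, y}} = P1" unfolding swap_eq P1_def using not_in_P distinct by blast
  then show "unswap (swap P x) = P" unfolding unswap_def pa pb using xy(1) unfolding P1_def by blast
qed

lemma unswap:
  assumes pm: "perfect_matching S Q" and nab: "{a, b} \<notin> Q"
  shows "perfect_matching S' (unswap Q)" "partner Q a \<in> S'" "swap (unswap Q) (partner Q a) = Q"
proof -
  define pa where "pa = partner Q a"
  define pb where "pb = partner Q b"
  have A: "{a, pa} \<in> Q" "pa \<noteq> a" "pa \<in> S" using partner[OF pm ab(1)] unfolding pa_def by auto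
  have B: "{b, pb} \<in> Q" "pb \<noteq> b" "pb \<in> S" using partner[OF pm ab(2)] unfolding pb_def by auto
  have "pa \<noteq> b" using A(1) nab by auto
  have "pb \<noteq> a" using B(1) nab by (auto simp: insert_commute)
  have "pa \<noteq> pb"
  proof
    assume "pa = pb"
    then have "{a, pa} = {b, pb}" using perfect_matching_unique[OF pm A(1) B(1), of pa] by simp
    then show False using ab(3) \<open>pa \<noteq> b\<close> by (auto simp: doubleton_eq_iff)
  qed
  define Q2 where "Q2 = Q - {{a, pa}} - {{b, pb}}"
  have "{b, pb} \<in> Q - {{a, pa}}" using B(1) ab(3) \<open>pa \<noteq> b\<close> by (auto simp: doubleton_eq_iff)
  then have "perfect_matching (S - {a, pa} - {b, pb}) Q2"
    unfolding Q2_def by (rule perfect_matching_Diff[OF perfect_matching_Diff[OF pm A(1)]])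
  then have "perfect_matching (insert pa (insert pb (S - {a, pa} - {b, pb}))) (insert {pa, pb} Q2)"
    by (rule perfect_matching_insert) (use \<open>pa \<noteq> pb\<close> in auto)
  moreover have "insert pa (insert pb (S - {a, pa} - {b, pb})) = S'"
    using A(2,3) B(2,3) \<open>pa \<noteq> b\<close> \<open>pb \<noteq> a\<close> by blast
  moreover have unswap_eq: "unswap Q = insert {pa, pb} Q2" unfolding unswap_def Q2_def pa_def pb_def ..
  ultimately show pm': "perfect_matching S' (unswap Q)" by simp
  show "partner Q a \<in> S'" unfolding pa_def[symmetric] using A(2,3) \<open>pa \<noteq> b\<close> by blast
  have "partner (unswap Q) pa = pb"
    by (rule partner_eqI[OF pm']) (use \<open>pa \<noteq> pb\<close> in \<open>simp_all add: unswap_eq\<close>)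
  moreover have "{pa, pb} \<notin> Q2"
  proof
    assume "{pa, pb} \<in> Q2"
    then have "{a, pa} = {pa, pb}" using perfect_matching_unique[OF pm A(1), of "{pa, pb}" pa] Q2_def by simp
    then show False using A(2) \<open>pb \<noteq> a\<close> by (auto simp: doubleton_eq_iff)
  qed
  then have "unswap Q - {{pa, pb}} = Q2" unfolding unswap_eq by blast
  ultimately have "swap (unswap Q) pa = insert {a, pa} (insert {b, pb} Q2)" unfolding swap_def by simp
  also have "\<dots> = Q" unfolding Q2_def using A(1) B(1) by blast
  finally show "swap (unswap Q) (partner Q a) = Q" unfolding pa_def .
qed

lemma sum_perfect_matchings_split:
  "(\<Sum>Q | perfect_matching S Q. f Q) =
   (\<Sum>P | perfect_matching S' P. f (insert {a, b} P) + (\<Sum>x\<in>S'. f (swap P x)))"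
proof -
  let ?PS = "{Q. perfect_matching S Q}" and ?PS' = "{P. perfect_matching S' P}"
  have finite_S': "finite S'" using finite_S by simp
  have "(\<Sum>Q\<in>?PS. f Q) = (\<Sum>Q\<in>?PS \<inter> {Q. {a, b} \<in> Q}. f Q) + (\<Sum>Q\<in>?PS - {Q. {a, b} \<in> Q}. f Q)"
    by (rule sum.Int_Diff[OF finite_perfect_matchings[OF finite_S]])
  moreover have "(\<Sum>P\<in>?PS'. f (insert {a, b} P)) = (\<Sum>Q\<in>?PS \<inter> {Q. {a, b} \<in> Q}. f Q)"
  proof (rule sum.reindex_bij_witness[where j = "insert {a, b}" and i = "\<lambda>Q. Q - {{a, b}}"])
    fix P assume P: "P \<in> ?PS'"
    then have "{a, b} \<notin> P" using perfect_matching_subset[of S' P] by blast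
    then show "insert {a, b} P - {{a, b}} = P" by simp
    show "insert {a, b} P \<in> ?PS \<inter> {Q. {a, b} \<in> Q}" using perfect_matching_insert_ab P by simp
  next
    fix Q assume Q: "Q \<in> ?PS \<inter> {Q. {a, b} \<in> Q}"
    then show "insert {a, b} (Q - {{a, b}}) = Q" by blast
    show "Q - {{a, b}} \<in> ?PS'" using perfect_matching_Diff[of S Q a b] Q by simp
  qed simp
  moreover have "(\<Sum>(P, x)\<in>Sigma ?PS' (\<lambda>_. S'). f (swap P x)) = (\<Sum>Q\<in>?PS - {Q. {a, b} \<in> Q}. f Q)"
    by (rule sum.reindex_bij_witness[where j = "\<lambda>(P, x). swap P x" and i = "\<lambda>Q. (unswap Q, partner Q a)"])
      (use swap unswap in auto)
  moreover have "(\<Sum>P\<in>?PS'. \<Sum>x\<in>S'. f (swap P x)) = (\<Sum>(P, x)\<in>Sigma ?PS' (\<lambda>_. S'). f (swap P x))"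
    by (rule sum.Sigma[OF finite_perfect_matchings[OF finite_S']]) (use finite_S' in simp)
  ultimately show ?thesis by (simp add: sum.distrib)
qed

end

section \<open>Cancellation of the weights\<close>

lemma ff2_Suc: "ff2 a (Suc k) = ff2 a k * (a - 2 * real k)"
  unfolding ff2_def by simp

lemma ff2_ratio_Suc:
  assumes "D \<noteq> 2 * real g"
  shows "(D - 2 * real g) * (ff2 (-2) (Suc g) / ff2 D (Suc g)) = - (2 * real g + 2) * (ff2 (-2) g / ff2 D g)"
proof -
  have "D - 2 * real g \<noteq> 0" using assms by simp
  then show ?thesis unfolding ff2_Suc by (simp add: divide_simps)
qed

definition num_GG_pairs :: "('e, 'f) half set set \<Rightarrow> nat" where
  "num_GG_pairs Q = card {p \<in> Q. \<forall>h\<in>p. is_G_half h}"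

locale induced_GG_pair = induced_pair_at V G H v M' a b
  for V :: "'v set" and G :: "('v, 'e) mgraph" and H :: "('v, 'f) mgraph"
    and v :: 'v and M' :: "'v \<Rightarrow> ('e, 'f) half set set" and a b :: "('e, 'f) half" +
  assumes G_halfs: "is_G_half a" "is_G_half b"
    and balanced: "deg G v = deg H v"
begin

lemma finite_S': "finite S'"
  using finite_S by simp

lemma card_S'_G: "card {x \<in> S'. is_G_half x} + 2 = deg G v"
proof -
  have "{x \<in> S. is_G_half x} = insert a (insert b {x \<in> S'. is_G_half x})"
    using S_eq G_halfs by auto
  then show ?thesis using card_G_halfs_at[of G H v] finite_S' ab(3) by simp
qed

lemma card_S'_H: "card {x \<in> S'. \<not> is_G_half x} = deg G v"
proof -
  have "{x \<in> S'. \<not> is_G_half x} = {x \<in> S. \<not> is_G_half x}"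
    using G_halfs by auto
  then show ?thesis using card_H_halfs_at[of G H v] balanced by simp
qed

lemma card_S': "card S' + 2 = 2 * deg G v"
proof -
  have "card S' = card {x \<in> S'. is_G_half x} + card {x \<in> S'. \<not> is_G_half x}"
    using finite_S' by (subst card_Un_disjoint[symmetric]) (auto intro: arg_cong[where f = card])
  then show ?thesis using card_S'_G card_S'_H by simp
qed

lemma card_HH_halfs:
  assumes "perfect_matching S' P"
  shows "card {x \<in> S'. \<not> is_G_half x \<and> \<not> is_G_half (partner P x)} = 2 * num_GG_pairs P + 2"
  using card_partner_neither[OF assms finite_S', of is_G_half] card_S'_G card_S'_H
  unfolding num_GG_pairs_def by simp

lemma num_GG_pairs_insert_ab:
  assumes "perfect_matching S' P"
  shows "num_GG_pairs (insert {a, b} P) = num_GG_pairs P + 1"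
proof -
  have "{a, b} \<notin> P" using perfect_matching_subset[OF assms] by blast
  then show ?thesis unfolding num_GG_pairs_def
    using card_filter_insert[OF perfect_matching_finite[OF finite_S' assms]] G_halfs by simp
qed

lemma num_GG_pairs_swap:
  assumes pm: "perfect_matching S' P" and x: "x \<in> S'"
  shows "num_GG_pairs (swap P x) =
    num_GG_pairs P + (if is_G_half x \<or> is_G_half (partner P x) then 1 else 0)"
proof -
  define y where "y = partner P x"
  have xy: "{x, y} \<in> P" "y \<in> S'" using partner[OF pm x] unfolding y_def by auto
  have fin: "finite P" using perfect_matching_finite[OF finite_S' pm] .
  let ?GG = "\<lambda>p. \<forall>h\<in>p. is_G_half h"
  have "card {p \<in> P. ?GG p} = card {p \<in> P - {{x, y}}. ?GG p} + (if ?GG {x, y} then 1 else 0)"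
    using card_filter_insert[of "P - {{x, y}}" "{x, y}" ?GG] fin xy(1) by (simp add: insert_absorb)
  moreover have new1: "{b, y} \<notin> P - {{x, y}}" and new2: "{a, x} \<notin> insert {b, y} (P - {{x, y}})"
    using perfect_matching_subset[OF pm] ab(3) x xy(2) by (auto simp: doubleton_eq_iff)
  then have "card {p \<in> swap P x. ?GG p} =
      card {p \<in> P - {{x, y}}. ?GG p} + (if ?GG {b, y} then 1 else 0) + (if ?GG {a, x} then 1 else 0)"
    unfolding swap_def y_def[symmetric]
    using card_filter_insert[OF _ new2, of ?GG] card_filter_insert[OF _ new1, of ?GG] fin by simp
  ultimately show ?thesis unfolding num_GG_pairs_def y_def[symmetric] using G_halfs by auto
qed

definition weight :: "nat \<Rightarrow> nat \<Rightarrow> real" where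
  "weight n k = ff2 (-2) k / ff2 (real n + 2 * real (deg G v) - 4) k"

definition contrib :: "nat \<Rightarrow> ('e, 'f) half set set \<Rightarrow> real" where
  "contrib n Q = real n ^ cycles V G H (extend Q) * weight n (num_GG_pairs Q)"

lemma num_GG_pairs_bound:
  assumes "perfect_matching S' P"
  shows "2 * num_GG_pairs P + 4 \<le> 2 * deg G v"
proof -
  have "card {x \<in> S'. \<not> is_G_half x \<and> \<not> is_G_half (partner P x)} \<le> card S'"
    by (rule card_mono[OF finite_S']) blast
  then show ?thesis using card_HH_halfs[OF assms] card_S' by simp
qed

lemma sum_weight_swaps:
  assumes pm: "perfect_matching S' P"
  defines "g \<equiv> num_GG_pairs P"
  shows "(\<Sum>x\<in>S'. weight n (num_GG_pairs (swap P x))) =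
    real (2 * deg G v - 4 - 2 * g) * weight n (Suc g) + real (2 * g + 2) * weight n g"
proof -
  define HH where "HH = {x \<in> S'. \<not> is_G_half x \<and> \<not> is_G_half (partner P x)}"
  have HH: "HH \<subseteq> S'" "card HH = 2 * g + 2"
    using card_HH_halfs[OF pm] unfolding HH_def g_def by auto
  have "(\<Sum>x\<in>S'. weight n (num_GG_pairs (swap P x))) = (\<Sum>x\<in>S'. weight n (if x \<in> HH then g else Suc g))"
    by (rule sum.cong) (simp_all add: num_GG_pairs_swap[OF pm] HH_def g_def)
  also have "\<dots> = real (card (S' - HH)) * weight n (Suc g) + real (card HH) * weight n g"
    using sum.If_cases[OF finite_S', of "\<lambda>x. x \<in> HH" "\<lambda>_. weight n g" "\<lambda>_. weight n (Suc g)"] HH(1)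
    by (simp add: Int_absorb1 Diff_eq[symmetric] if_distrib[of "weight n"])
  also have "card (S' - HH) = card S' - card HH"
    by (rule card_Diff_subset[OF finite_subset[OF HH(1) finite_S'] HH(1)])
  also have "card S' - card HH = 2 * deg G v - 4 - 2 * g"
    using card_S' HH(2) by simp
  finally show ?thesis unfolding HH(2) .
qed

lemma contrib_insert_ab_plus_swaps:
  assumes n: "0 < n" and pm: "perfect_matching S' P"
  shows "contrib n (insert {a, b} P) + (\<Sum>x\<in>S'. contrib n (swap P x)) = 0"
proof -
  define g where "g = num_GG_pairs P"
  define c where "c = cycles V G H (extend (insert {a, b} P)) - 1"
  have bound: "2 * g + 4 \<le> 2 * deg G v" using num_GG_pairs_bound[OF pm] unfolding g_def .
  then have "card S' \<noteq> 0" using card_S' by simp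
  then have "S' \<noteq> {}" by (metis card.empty)
  then obtain x0 where "x0 \<in> S'" by blast
  then have cycles_ab: "cycles V G H (extend (insert {a, b} P)) = Suc c"
    using cycles_swap[OF pm] unfolding c_def by fastforce
  have "(\<Sum>x\<in>S'. contrib n (swap P x)) = (\<Sum>x\<in>S'. real n ^ c * weight n (num_GG_pairs (swap P x)))"
    by (rule sum.cong) (use cycles_swap[OF pm] cycles_ab in \<open>simp_all add: contrib_def\<close>)
  then have swaps: "(\<Sum>x\<in>S'. contrib n (swap P x)) =
      real n ^ c * (real (2 * deg G v - 4 - 2 * g) * weight n (Suc g) + real (2 * g + 2) * weight n g)"
    unfolding sum_distrib_left[symmetric] sum_weight_swaps[OF pm] g_def .
  have ab: "contrib n (insert {a, b} P) = real n ^ c * (real n * weight n (Suc g))"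
    unfolding contrib_def cycles_ab num_GG_pairs_insert_ab[OF pm] g_def[symmetric] by simp
  have coeff: "real n + real (2 * deg G v - 4 - 2 * g) = real n + 2 * real (deg G v) - 4 - 2 * real g"
    using bound by (simp add: of_nat_diff)
  have ratio: "(real n + 2 * real (deg G v) - 4 - 2 * real g) * weight n (Suc g) = - (2 * real g + 2) * weight n g"
    unfolding weight_def by (rule ff2_ratio_Suc) (use n bound in linarith)
  have "contrib n (insert {a, b} P) + (\<Sum>x\<in>S'. contrib n (swap P x)) = real n ^ c *
      ((real n + real (2 * deg G v - 4 - 2 * g)) * weight n (Suc g) + (2 * real g + 2) * weight n g)"
    unfolding swaps ab by (simp add: algebra_simps)
  also have "\<dots> = 0" unfolding coeff ratio by (simp add: algebra_simps)
  finally show ?thesis .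
qed

lemma sum_contrib: "0 < n \<Longrightarrow> (\<Sum>Q | perfect_matching S Q. contrib n Q) = 0"
  unfolding sum_perfect_matchings_split by (simp add: contrib_insert_ab_plus_swaps)

lemma bij_betw_extend:
  "bij_betw extend {Q. perfect_matching S Q} {M \<in> PM V G H. \<forall>w\<in>V - {v}. M w = M' w}"
proof (rule bij_betw_byWitness[where f' = "\<lambda>M. M v"])
  show "\<forall>Q\<in>{Q. perfect_matching S Q}. extend Q v = Q" by (simp add: extend_def)
  show "\<forall>M\<in>{M \<in> PM V G H. \<forall>w\<in>V - {v}. M w = M' w}. extend (M v) = M"
    by (auto simp: extend_def PM_def fun_eq_iff)
  show "extend ` {Q. perfect_matching S Q} \<subseteq> {M \<in> PM V G H. \<forall>w\<in>V - {v}. M w = M' w}"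
    using M' v by (auto simp: extend_def PM_def split: if_splits)
  show "(\<lambda>M. M v) ` {M \<in> PM V G H. \<forall>w\<in>V - {v}. M w = M' w} \<subseteq> {Q. perfect_matching S Q}"
    using v by (auto simp: PM_def)
qed

lemma cM_extend:
  assumes "finite V"
  shows "cM V G H n (extend Q) = contrib n Q *
    (\<Prod>w\<in>V - {v}. ff2 (-2) (gM M' w) / ff2 (real n + 2 * real (deg G w) - 4) (gM M' w))"
proof -
  let ?r = "\<lambda>M w. ff2 (-2) (gM M w) / ff2 (real n + 2 * real (deg G w) - 4) (gM M w)"
  have "(\<Prod>w\<in>V. ?r (extend Q) w) = ?r (extend Q) v * (\<Prod>w\<in>V - {v}. ?r (extend Q) w)"
    by (rule prod.remove[OF assms v])
  moreover have "?r (extend Q) v = weight n (num_GG_pairs Q)"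
    by (simp add: weight_def gM_def num_GG_pairs_def extend_def)
  moreover have "(\<Prod>w\<in>V - {v}. ?r (extend Q) w) = (\<Prod>w\<in>V - {v}. ?r M' w)"
    by (rule prod.cong) (simp_all add: gM_def extend_def)
  ultimately show ?thesis unfolding cM_def contrib_def by simp
qed

lemma sum_cM_agreeing:
  assumes "finite V" "0 < n"
  shows "(\<Sum>M\<in>{M \<in> PM V G H. \<forall>w\<in>V - {v}. M w = M' w}. cM V G H n M) = 0"
proof -
  have "(\<Sum>M\<in>{M \<in> PM V G H. \<forall>w\<in>V - {v}. M w = M' w}. cM V G H n M) =
      (\<Sum>Q | perfect_matching S Q. cM V G H n (extend Q))"
    by (rule sum.reindex_bij_betw[OF bij_betw_extend, symmetric])
  also have "\<dots> = 0"
    using sum_contrib[OF assms(2)] by (simp add: cM_extend[OF assms(1)] sum_distrib_right[symmetric])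
  finally show ?thesis .
qed

end

theorem mainTheorem11:
  fixes V :: "'v set" and G :: "('v, 'e) mgraph" and H :: "('v, 'f) mgraph"
    and n :: nat and v :: 'v and M' :: "'v \<Rightarrow> ('e, 'f) half set set"
  assumes "finite V"
    and "loopless_multigraph V G" and "loopless_multigraph V H"
    and "\<forall>w\<in>V. deg G w = deg H w"
    and "n \<ge> 2"
    and "v \<in> V"
    and "\<forall>w\<in>V - {v}. perfect_matching (halfs_at G H w) (M' w)"
    and "\<exists>h h'. h \<in> halfs_at G H v \<and> h' \<in> halfs_at G H v \<and> h \<noteq> h' \<and>
           is_G_half h \<and> is_G_half h' \<and> induced_pair G H M' v h h'"
  shows "(\<Sum>M\<in>{M \<in> PM V G H. \<forall>w\<in>V - {v}. M w = M' w}. cM V G H n M) = 0"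
proof -
  obtain h h' where "h \<in> halfs_at G H v" "h' \<in> halfs_at G H v" "h \<noteq> h'"
    "is_G_half h" "is_G_half h'" "induced_pair G H M' v h h'"
    using assms(8) by blast
  then interpret induced_GG_pair V G H v M' h h'
    using assms by unfold_locales auto
  show ?thesis using sum_cM_agreeing assms(1,5) by simp
qed

end
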